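(* Let $G$ be the cube graph $Q_3$, let $P$ be a pot realizing $G$ according to Scenario 3, and let $\lambda$ be an assembly design of $G$ with $P_\lambda(G)\subseteq P$. Then there are at most two pairwise disjoint pairs $\{v_i,v_j\}$ of distinct vertices of $G$ with $\lambda(v_i)=\lambda(v_j)$; that is, there do not exist three pairwise disjoint such pairs.
   Context: Fix a set $\Sigma$ of symbols (bond-edge types) and a disjoint copy $\hat\Sigma=\{\hat a:a\in\Sigma\}$ with $\hat{\hat a}=a$; elements of $\Sigma\cup\hat\Sigma$ are cohesive-end types. A tile is a finite multiset of cohesive-end types. A pot is a finite set $P$ of tiles such that whenever $x$ occurs in a tile of $P$, $\hat x$ occurs in some tile of $P$. Graphs are finite, loops and multiple edges allowed. An assembly design of a graph $H$ is a labeling $\lambda$ of the half-edges of $H$ by cohesive-end types such that the two half-edges of each edge receive complementary labels $x,\hat x$; $\lambda(v)=t_v$ is the multiset of labels of half-edges at $v$, and $P_\lambda(H)=\{t_v\}$. $P$ realizes $H$ ($H\in\mathcal{O}(P)$) if some assembly design $\lambda$ has $P_\lambda(H)\subseteq P$. $P$ realizes $G$ according to Scenario 3 if $G\in\mathcal{O}(P)$, every $H\in\mathcal{O}(P)$ has $\#V(H)\ge\#V(G)$, and every $H\in\mathcal{O}(P)$ with $\#V(H)=\#V(G)$ is isomorphic to $G$. *)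

theory Defs
  imports Main "HOL-Library.Multiset"
begin

text \<open>Cohesive-end types: a symbol of Sigma (the type 'a) together with a flag;
  (a, False) is the bond-edge type a, (a, True) is its hatted copy.\<close>
type_synonym 'a cend = "'a \<times> bool"

definition compl :: "'a cend \<Rightarrow> 'a cend" where
  "compl x = (fst x, \<not> snd x)"

type_synonym 'a tile = "'a cend multiset"

definition pot :: "'a tile set \<Rightarrow> bool" where
  "pot P \<longleftrightarrow> finite P \<and> (\<forall>t\<in>P. \<forall>x. x \<in># t \<longrightarrow> (\<exists>t'\<in>P. compl x \<in># t'))"

text \<open>The half-edges of e are (e, True) (at fst (ends e)) and (e, False) (at snd (ends e)).\<close>
record graph =
  verts :: "nat set"
  edges :: "nat set"
  ends  :: "nat \<Rightarrow> nat \<times> nat"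

definition wf_graph :: "graph \<Rightarrow> bool" where
  "wf_graph G \<longleftrightarrow> finite (verts G) \<and> finite (edges G) \<and> verts G \<noteq> {} \<and>
     (\<forall>e\<in>edges G. fst (ends G e) \<in> verts G \<and> snd (ends G e) \<in> verts G)"

definition hend :: "graph \<Rightarrow> nat \<times> bool \<Rightarrow> nat" where
  "hend G h = (if snd h then fst (ends G (fst h)) else snd (ends G (fst h)))"

definition half_edges_at :: "graph \<Rightarrow> nat \<Rightarrow> (nat \<times> bool) set" where
  "half_edges_at G v = {h. fst h \<in> edges G \<and> hend G h = v}"

definition tile_at :: "graph \<Rightarrow> (nat \<times> bool \<Rightarrow> 'a cend) \<Rightarrow> nat \<Rightarrow> 'a tile" where
  "tile_at G lam v = image_mset lam (mset_set (half_edges_at G v))"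

definition assembly_design :: "graph \<Rightarrow> (nat \<times> bool \<Rightarrow> 'a cend) \<Rightarrow> bool" where
  "assembly_design G lam \<longleftrightarrow> (\<forall>e\<in>edges G. lam (e, True) = compl (lam (e, False)))"

definition pot_of :: "graph \<Rightarrow> (nat \<times> bool \<Rightarrow> 'a cend) \<Rightarrow> 'a tile set" where
  "pot_of G lam = tile_at G lam ` verts G"

definition realizes :: "'a tile set \<Rightarrow> graph \<Rightarrow> bool" where
  "realizes P H \<longleftrightarrow> wf_graph H \<and> (\<exists>lam. assembly_design H lam \<and> pot_of H lam \<subseteq> P)"

definition graph_iso :: "graph \<Rightarrow> graph \<Rightarrow> bool" where
  "graph_iso G H \<longleftrightarrow> (\<exists>f g. bij_betw f (verts G) (verts H) \<and> bij_betw g (edges G) (edges H) \<and>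
     (\<forall>e\<in>edges G. ends H (g e) = (f (fst (ends G e)), f (snd (ends G e))) \<or>
                  ends H (g e) = (f (snd (ends G e)), f (fst (ends G e)))))"

definition scenario3 :: "'a tile set \<Rightarrow> graph \<Rightarrow> bool" where
  "scenario3 P G \<longleftrightarrow> realizes P G \<and>
     (\<forall>H. realizes P H \<longrightarrow> card (verts H) \<ge> card (verts G)) \<and>
     (\<forall>H. realizes P H \<and> card (verts H) = card (verts G) \<longrightarrow> graph_iso H G)"

text \<open>The cube graph Q_3: vertices 0..7 (bit strings), edges join vertices differing in one bit.\<close>
definition Q3_edge_list :: "(nat \<times> nat) list" where
  "Q3_edge_list = [(0,1),(2,3),(4,5),(6,7),(0,2),(1,3),(4,6),(5,7),(0,4),(1,5),(2,6),(3,7)]"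

definition Q3 :: graph where
  "Q3 = \<lparr> verts = {0..<8}, edges = {0..<12},
          ends = (\<lambda>e. if e < 12 then Q3_edge_list ! e else (0,0)) \<rparr>"

end

(*
  Exchanging the endpoints of two half-edges that carry the same label turns an assembly
  design of Q3 into one of another graph on eight vertices with the same tiles, so by
  Scenario 3 that graph is again isomorphic to Q3: it has no loops, no parallel edges and
  no triangles. For two distinct vertices u, v with the same tile this rules out u, v being
  adjacent (a loop appears) or antipodal (a triangle appears), so they are at distance two;
  avoiding parallel edges then forces the labels of u to reappear at v in the direction
  obtained by exchanging the two directions leading from u to v. Hence the three labels at
  such a vertex are distinct, while each of the two common neighbours of u and v receives two
  equal labels and so lies in no pair of vertices with equal tiles. Three disjoint such pairs
  leave only two vertices outside them, which then are common neighbours of all four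
  vertices of two of the pairs; but two vertices of Q3 have at most two common neighbours.
*)
theory Submission
  imports Defs "HOL-Combinatorics.Transposition"
begin

section \<open>Exchanging half-edges with equal labels\<close>

definition swap_half_edges :: "graph \<Rightarrow> nat \<times> bool \<Rightarrow> nat \<times> bool \<Rightarrow> graph" where
  "swap_half_edges G h1 h2 = G\<lparr>ends := \<lambda>e.
     (hend G (transpose h1 h2 (e, True)), hend G (transpose h1 h2 (e, False)))\<rparr>"

lemma verts_swap_half_edges [simp]: "verts (swap_half_edges G h1 h2) = verts G"
  and edges_swap_half_edges [simp]: "edges (swap_half_edges G h1 h2) = edges G"
  by (simp_all add: swap_half_edges_def)

lemma hend_swap_half_edges: "hend (swap_half_edges G h1 h2) h = hend G (transpose h1 h2 h)"
  by (cases h) (simp add: hend_def swap_half_edges_def)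

lemma fst_transpose_in_edges:
  assumes "fst h1 \<in> edges G" "fst h2 \<in> edges G"
  shows "fst (transpose h1 h2 h) \<in> edges G \<longleftrightarrow> fst h \<in> edges G"
  using assms by (auto simp: transpose_def)

lemma wf_graph_swap_half_edges:
  assumes "wf_graph G" "fst h1 \<in> edges G" "fst h2 \<in> edges G"
  shows "wf_graph (swap_half_edges G h1 h2)"
proof -
  have "hend G (transpose h1 h2 (e, b)) \<in> verts G" if "e \<in> edges G" for e b
    using assms(1) that fst_transpose_in_edges[OF assms(2,3), of "(e, b)"]
    by (auto simp: wf_graph_def hend_def)
  then show ?thesis
    using assms(1) by (simp add: wf_graph_def swap_half_edges_def)
qed

lemma half_edges_at_swap_half_edges:
  assumes "fst h1 \<in> edges G" "fst h2 \<in> edges G"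
  shows "half_edges_at (swap_half_edges G h1 h2) w = transpose h1 h2 ` half_edges_at G w"
proof -
  have swapped: "h \<in> half_edges_at (swap_half_edges G h1 h2) w \<longleftrightarrow>
      transpose h1 h2 h \<in> half_edges_at G w" for h
    using fst_transpose_in_edges[OF assms] by (simp add: half_edges_at_def hend_swap_half_edges)
  show ?thesis
  proof (intro set_eqI iffI)
    fix h assume "h \<in> half_edges_at (swap_half_edges G h1 h2) w"
    then show "h \<in> transpose h1 h2 ` half_edges_at G w"
      using swapped rev_image_eqI[of "transpose h1 h2 h" _ h "transpose h1 h2"] by simp
  qed (use swapped in auto)
qed

lemma tile_at_swap_half_edges:
  assumes "fst h1 \<in> edges G" "fst h2 \<in> edges G" "lam h1 = lam h2"
  shows "tile_at (swap_half_edges G h1 h2) lam w = tile_at G lam w"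
proof -
  have "lam \<circ> transpose h1 h2 = lam"
    using assms(3) by (auto simp: transpose_def)
  then show ?thesis
    unfolding tile_at_def half_edges_at_swap_half_edges[OF assms(1,2)]
    by (simp add: image_mset_mset_set[symmetric] multiset.map_comp)
qed

lemma graph_iso_swap_half_edges:
  assumes "scenario3 P G" "assembly_design G lam" "pot_of G lam \<subseteq> P"
    and "fst h1 \<in> edges G" "fst h2 \<in> edges G" "lam h1 = lam h2"
  shows "graph_iso (swap_half_edges G h1 h2) G"
proof -
  have "wf_graph G"
    using assms(1) by (simp add: scenario3_def realizes_def)
  have "realizes P (swap_half_edges G h1 h2)"
    unfolding realizes_def
  proof (intro conjI exI)
    show "wf_graph (swap_half_edges G h1 h2)"
      using wf_graph_swap_half_edges[OF \<open>wf_graph G\<close> assms(4,5)] .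
    show "assembly_design (swap_half_edges G h1 h2) lam"
      using assms(2) by (simp add: assembly_design_def)
    show "pot_of (swap_half_edges G h1 h2) lam \<subseteq> P"
      using assms(3) tile_at_swap_half_edges[OF assms(4-6)] by (simp add: pot_of_def)
  qed
  then show ?thesis
    using assms(1) by (simp add: scenario3_def)
qed

section \<open>Loops, parallel edges and triangles\<close>

definition endpoints :: "graph \<Rightarrow> nat \<Rightarrow> nat set" where
  "endpoints G e = {fst (ends G e), snd (ends G e)}"

definition loop_free :: "graph \<Rightarrow> bool" where
  "loop_free G \<longleftrightarrow> (\<forall>e\<in>edges G. fst (ends G e) \<noteq> snd (ends G e))"

definition multi_edge_free :: "graph \<Rightarrow> bool" where
  "multi_edge_free G \<longleftrightarrow> inj_on (endpoints G) (edges G)"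

definition adjacent :: "graph \<Rightarrow> nat \<Rightarrow> nat \<Rightarrow> bool" where
  "adjacent G a b \<longleftrightarrow> (\<exists>e\<in>edges G. endpoints G e = {a, b})"

definition triangle_free :: "graph \<Rightarrow> bool" where
  "triangle_free G \<longleftrightarrow>
     (\<forall>a b c. adjacent G a b \<and> adjacent G b c \<and> adjacent G a c \<longrightarrow> a = b \<or> b = c \<or> a = c)"

lemma endpoints_eq_hend: "endpoints G e = {hend G (e, True), hend G (e, False)}"
  by (simp add: endpoints_def hend_def)

lemma loop_free_endpoints_not_singleton:
  "loop_free G \<Longrightarrow> e \<in> edges G \<Longrightarrow> endpoints G e \<noteq> {a}"
  by (auto simp: loop_free_def endpoints_def doubleton_eq_iff)

lemma graph_iso_reflects_simple_triangle_free:
  assumes "graph_iso H G" "wf_graph H"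
    and "loop_free G" "multi_edge_free G" "triangle_free G"
  shows "loop_free H \<and> multi_edge_free H \<and> triangle_free H"
proof -
  obtain f g where f: "bij_betw f (verts H) (verts G)" and g: "bij_betw g (edges H) (edges G)"
    and fg: "\<forall>e\<in>edges H. ends G (g e) = (f (fst (ends H e)), f (snd (ends H e))) \<or>
                         ends G (g e) = (f (snd (ends H e)), f (fst (ends H e)))"
    using assms(1) unfolding graph_iso_def by blast
  have g_edge: "g e \<in> edges G" if "e \<in> edges H" for e
    using g that by (auto simp: bij_betw_def)
  have endpoints_g: "endpoints G (g e) = f ` endpoints H e" if "e \<in> edges H" for e
    using fg that by (auto simp: endpoints_def)
  have "loop_free H"
    unfolding loop_free_def
  proof
    fix e assume "e \<in> edges H"
    then show "fst (ends H e) \<noteq> snd (ends H e)"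
      using fg assms(3) g_edge unfolding loop_free_def by force
  qed
  moreover have "multi_edge_free H"
    unfolding multi_edge_free_def
  proof (rule inj_onI)
    fix e e' assume e: "e \<in> edges H" "e' \<in> edges H" and "endpoints H e = endpoints H e'"
    then have "endpoints G (g e) = endpoints G (g e')"
      using endpoints_g by simp
    then have "g e = g e'"
      using assms(4) e g_edge unfolding multi_edge_free_def by (blast dest: inj_onD)
    then show "e = e'"
      using g e by (auto simp: bij_betw_def dest: inj_onD)
  qed
  moreover have "triangle_free H"
    unfolding triangle_free_def
  proof (intro allI impI)
    have adjacent_f: "adjacent G (f a) (f b) \<and> a \<in> verts H \<and> b \<in> verts H"
      if ab: "adjacent H a b" for a b
    proof -
      obtain e where e: "e \<in> edges H" "endpoints H e = {a, b}"
        using ab unfolding adjacent_def by blast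
      then have "endpoints G (g e) = {f a, f b}"
        using endpoints_g by simp
      moreover have "a \<in> verts H \<and> b \<in> verts H"
        using e assms(2) by (auto simp: wf_graph_def endpoints_def doubleton_eq_iff)
      ultimately show ?thesis
        using g_edge[OF e(1)] unfolding adjacent_def by blast
    qed
    fix a b c assume "adjacent H a b \<and> adjacent H b c \<and> adjacent H a c"
    then have "f a = f b \<or> f b = f c \<or> f a = f c" and "a \<in> verts H" "b \<in> verts H" "c \<in> verts H"
      using adjacent_f assms(5) unfolding triangle_free_def by meson+
    then show "a = b \<or> b = c \<or> a = c"
      using f by (auto simp: bij_betw_def dest: inj_onD)
  qed
  ultimately show ?thesis by blast
qed

section \<open>Coordinates on the cube\<close>

lemma all_less_3: "(\<forall>k<3. P k) \<longleftrightarrow> P 0 \<and> P 1 \<and> P (2::nat)"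
  by (simp add: numeral_eq_Suc All_less_Suc2)

lemma all_less_8: "(\<forall>w<8. P w) \<longleftrightarrow> P 0 \<and> P 1 \<and> P 2 \<and> P 3 \<and> P 4 \<and> P 5 \<and> P 6 \<and> P (7::nat)"
  by (simp add: numeral_eq_Suc All_less_Suc2 conj_commute)

lemma all_less_12:
  "(\<forall>e<12. P e) \<longleftrightarrow> P 0 \<and> P 1 \<and> P 2 \<and> P 3 \<and> P 4 \<and> P 5 \<and> P 6 \<and> P 7 \<and> P 8 \<and> P 9 \<and> P 10 \<and> P (11::nat)"
  by (simp add: numeral_eq_Suc All_less_Suc2 conj_commute)

lemma flip_bit_flip_bit_same [simp]: "flip_bit k (flip_bit k w) = (w::nat)"
  by (rule bit_eqI) (auto simp: bit_flip_bit_iff)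

lemma flip_bit_commute: "flip_bit k (flip_bit l w) = flip_bit l (flip_bit k (w::nat))"
  by (rule bit_eqI) (auto simp: bit_flip_bit_iff)

lemma flip_bit_neq [simp]: "flip_bit k w \<noteq> (w::nat)" "w \<noteq> flip_bit k w"
  using bit_flip_bit_iff[of k w k] by auto

lemma flip_bit_eq_flip_bit_iff [simp]: "flip_bit k w = flip_bit l (w::nat) \<longleftrightarrow> k = l"
  using bit_flip_bit_iff[of k w k] bit_flip_bit_iff[of l w k] by auto

lemma flip_bit_flip_bit_neq_flip_bit:
  assumes "k \<noteq> l" shows "flip_bit l (flip_bit k w) \<noteq> flip_bit m (w::nat)"
proof
  assume eq: "flip_bit l (flip_bit k w) = flip_bit m w"
  have "bit (flip_bit l (flip_bit k w)) n = bit (flip_bit m w) n" for n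
    by (simp only: eq)
  from this[of k] this[of l] show False
    using assms by (auto simp: bit_flip_bit_iff)
qed

lemma flip_bit_less_8:
  assumes "w < 8" "k < 3" shows "flip_bit k w < (8::nat)"
proof -
  have "\<forall>w<8. \<forall>k<3. flip_bit k w < (8::nat)"
    unfolding all_less_8 all_less_3 by (simp add: flip_bit_nat_def)
  then show ?thesis
    using assms by blast
qed

text \<open>Vertices are read as 3-bit strings. The edges of \<^const>\<open>Q3_edge_list\<close> in direction \<open>k\<close>
  join \<open>w\<close> and \<open>flip_bit k w\<close>; they are numbered \<open>4 k\<close> plus \<open>w\<close> with bit \<open>k\<close> deleted, and their
  half-edge \<open>(e, True)\<close> lies at the endpoint with bit \<open>k\<close> clear.\<close>
definition cube_half_edge :: "nat \<Rightarrow> nat \<Rightarrow> nat \<times> bool" where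
  "cube_half_edge w k = (4 * k + w mod 2 ^ k + 2 ^ k * (w div 2 ^ Suc k), \<not> bit w k)"

lemma verts_Q3: "verts Q3 = {0..<8}"
  and edges_Q3: "edges Q3 = {0..<12}"
  by (simp_all add: Q3_def)

lemma cube_half_edge_table:
  "\<forall>w<8. \<forall>k<3. fst (cube_half_edge w k) \<in> edges Q3 \<and> hend Q3 (cube_half_edge w k) = w \<and>
     fst (cube_half_edge w k) div 4 = k \<and>
     (fst (cube_half_edge w k), \<not> snd (cube_half_edge w k)) = cube_half_edge (flip_bit k w) k"
  unfolding all_less_3 all_less_8
  by (simp add: cube_half_edge_def edges_Q3 hend_def Q3_def Q3_edge_list_def flip_bit_nat_def bit_nat_def)

lemma cube_half_edge_in_edges: "w < 8 \<Longrightarrow> k < 3 \<Longrightarrow> fst (cube_half_edge w k) \<in> edges Q3"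
  and hend_cube_half_edge [simp]: "w < 8 \<Longrightarrow> k < 3 \<Longrightarrow> hend Q3 (cube_half_edge w k) = w"
  and cube_half_edge_direction: "w < 8 \<Longrightarrow> k < 3 \<Longrightarrow> fst (cube_half_edge w k) div 4 = k"
  and cube_half_edge_opposite: "w < 8 \<Longrightarrow> k < 3 \<Longrightarrow>
    (fst (cube_half_edge w k), \<not> snd (cube_half_edge w k)) = cube_half_edge (flip_bit k w) k"
  using cube_half_edge_table by simp_all

lemma half_edge_Q3_cases:
  assumes "fst h \<in> edges Q3"
  obtains w k where "w < 8" "k < 3" "h = cube_half_edge w k"
proof -
  have "\<forall>e<12. \<forall>b. hend Q3 (e, b) < 8 \<and> e div 4 < 3 \<and> (e, b) = cube_half_edge (hend Q3 (e, b)) (e div 4)"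
    unfolding all_less_12
    by (simp add: cube_half_edge_def hend_def Q3_def Q3_edge_list_def bit_nat_def)
  then show ?thesis
    using assms that by (cases h) (auto simp: edges_Q3)
qed

lemma cube_half_edge_eq_iff:
  assumes "w < 8" "k < 3" "w' < 8" "k' < 3"
  shows "cube_half_edge w k = cube_half_edge w' k' \<longleftrightarrow> w = w' \<and> k = k'"
  using assms by (metis hend_cube_half_edge cube_half_edge_direction)

lemma cube_half_edge_same_edge:
  assumes "w < 8" "k < 3" "w' < 8" "k' < 3" "fst (cube_half_edge w k) = fst (cube_half_edge w' k')"
  shows "k' = k \<and> (w' = w \<or> w' = flip_bit k w)"
proof -
  have "k' = k"
    using assms cube_half_edge_direction by metis
  moreover have "cube_half_edge w' k \<in> {cube_half_edge w k, cube_half_edge (flip_bit k w) k}"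
    using assms \<open>k' = k\<close> cube_half_edge_opposite[OF assms(1,2), symmetric]
    by (cases "snd (cube_half_edge w' k) = snd (cube_half_edge w k)") (auto simp: prod_eq_iff)
  ultimately show ?thesis
    using assms flip_bit_less_8 by (auto simp: cube_half_edge_eq_iff)
qed

lemma half_edges_at_Q3:
  assumes "w < 8"
  shows "half_edges_at Q3 w = {cube_half_edge w 0, cube_half_edge w 1, cube_half_edge w 2}"
proof (intro set_eqI iffI)
  fix h assume h: "h \<in> half_edges_at Q3 w"
  then obtain w' k where "w' < 8" "k < 3" "h = cube_half_edge w' k"
    by (auto simp: half_edges_at_def elim: half_edge_Q3_cases)
  moreover have "w' = w"
    using h calculation by (simp add: half_edges_at_def)
  moreover have "\<forall>k<3. cube_half_edge w k \<in> {cube_half_edge w 0, cube_half_edge w 1, cube_half_edge w 2}"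
    by (simp add: all_less_3)
  ultimately show "h \<in> {cube_half_edge w 0, cube_half_edge w 1, cube_half_edge w 2}"
    by blast
qed (use assms cube_half_edge_in_edges in \<open>auto simp: half_edges_at_def\<close>)

lemma tile_at_Q3:
  assumes "w < 8"
  shows "tile_at Q3 lam w =
    {#lam (cube_half_edge w 0), lam (cube_half_edge w 1), lam (cube_half_edge w 2)#}"
  using assms by (simp add: tile_at_def half_edges_at_Q3 cube_half_edge_eq_iff)

lemma label_cube_half_edge_opposite:
  assumes "assembly_design Q3 lam" "w < 8" "k < 3"
  shows "lam (cube_half_edge (flip_bit k w) k) = compl (lam (cube_half_edge w k))"
proof -
  obtain e b where h: "cube_half_edge w k = (e, b)"
    by fastforce
  then have "e \<in> edges Q3" "cube_half_edge (flip_bit k w) k = (e, \<not> b)"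
    using cube_half_edge_in_edges[OF assms(2,3)] cube_half_edge_opposite[OF assms(2,3)] by auto
  then show ?thesis
    using assms(1) h by (cases b) (auto simp: assembly_design_def compl_def)
qed

lemma endpoints_cube_edge:
  assumes "w < 8" "k < 3"
  shows "endpoints G (fst (cube_half_edge w k)) =
    {hend G (cube_half_edge w k), hend G (cube_half_edge (flip_bit k w) k)}"
proof -
  obtain e b where h: "cube_half_edge w k = (e, b)"
    by fastforce
  then have "cube_half_edge (flip_bit k w) k = (e, \<not> b)"
    using cube_half_edge_opposite[OF assms] by auto
  then show ?thesis
    using h by (cases b) (auto simp: endpoints_eq_hend)
qed

lemma endpoints_Q3_cube_edge:
  "w < 8 \<Longrightarrow> k < 3 \<Longrightarrow> endpoints Q3 (fst (cube_half_edge w k)) = {w, flip_bit k w}"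
  by (simp add: endpoints_cube_edge flip_bit_less_8)

lemma edge_Q3_cases:
  assumes "e \<in> edges Q3"
  obtains w k where "w < 8" "k < 3" "e = fst (cube_half_edge w k)"
  using assms by (metis fst_conv half_edge_Q3_cases)

lemma adjacent_Q3_imp_flip_bit:
  assumes "adjacent Q3 a b"
  shows "\<exists>k<3. b = flip_bit k a"
proof -
  obtain e where e: "e \<in> edges Q3" "endpoints Q3 e = {a, b}"
    using assms unfolding adjacent_def by blast
  obtain w k where wk: "w < 8" "k < 3" "e = fst (cube_half_edge w k)"
    using e(1) by (rule edge_Q3_cases)
  then have "{a, b} = {w, flip_bit k w}"
    using e(2) by (simp add: endpoints_Q3_cube_edge)
  then show ?thesis
    using wk(2) by (auto simp: doubleton_eq_iff)
qed

lemma loop_free_Q3: "loop_free Q3"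
  unfolding loop_free_def
proof
  fix e assume "e \<in> edges Q3"
  then obtain w k where "w < 8" "k < 3" "e = fst (cube_half_edge w k)"
    by (rule edge_Q3_cases)
  then show "fst (ends Q3 e) \<noteq> snd (ends Q3 e)"
    using endpoints_Q3_cube_edge[of w k] by (auto simp: endpoints_def doubleton_eq_iff)
qed

lemma multi_edge_free_Q3: "multi_edge_free Q3"
  unfolding multi_edge_free_def
proof (rule inj_onI)
  fix e e' assume "e \<in> edges Q3" "e' \<in> edges Q3" and same: "endpoints Q3 e = endpoints Q3 e'"
  obtain w k where wk: "w < 8" "k < 3" "e = fst (cube_half_edge w k)"
    using \<open>e \<in> edges Q3\<close> by (rule edge_Q3_cases)
  obtain w' k' where wk': "w' < 8" "k' < 3" "e' = fst (cube_half_edge w' k')"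
    using \<open>e' \<in> edges Q3\<close> by (rule edge_Q3_cases)
  have "{w, flip_bit k w} = {w', flip_bit k' w'}"
    using same wk wk' by (simp add: endpoints_Q3_cube_edge)
  then have "w' = w \<and> flip_bit k' w = flip_bit k w \<or>
      w' = flip_bit k w \<and> flip_bit k' (flip_bit k w) = flip_bit k (flip_bit k w)"
    unfolding doubleton_eq_iff by auto
  then have "k' = k" "w' = w \<or> w' = flip_bit k w"
    by (auto simp only: flip_bit_eq_flip_bit_iff)
  moreover have "fst (cube_half_edge (flip_bit k w) k) = fst (cube_half_edge w k)"
    using cube_half_edge_opposite[OF wk(1,2)] by (metis fst_conv)
  ultimately show "e = e'"
    using wk wk' by auto
qed

lemma triangle_free_Q3: "triangle_free Q3"
  unfolding triangle_free_def
proof (intro allI impI)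
  fix a b c assume "adjacent Q3 a b \<and> adjacent Q3 b c \<and> adjacent Q3 a c"
  then obtain k l m where "b = flip_bit k a" "c = flip_bit l b" "c = flip_bit m a"
    using adjacent_Q3_imp_flip_bit by meson
  then show "a = b \<or> b = c \<or> a = c"
    using flip_bit_flip_bit_neq_flip_bit[of k l a m] by (cases "k = l") simp_all
qed

definition cube_neighbours :: "nat \<Rightarrow> nat set" where
  "cube_neighbours w = (\<lambda>k. flip_bit k w) ` {..<3}"

lemma flip_bit_in_cube_neighbours: "k < 3 \<Longrightarrow> flip_bit k w \<in> cube_neighbours w"
  by (simp add: cube_neighbours_def)

lemma cube_neighbours_sym:
  assumes "x \<in> cube_neighbours w"
  shows "w \<in> cube_neighbours x"
proof -
  obtain k where "k < 3" "x = flip_bit k w"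
    using assms by (auto simp: cube_neighbours_def)
  then show ?thesis
    using flip_bit_in_cube_neighbours[of k x] by simp
qed

lemma card_common_cube_neighbours:
  assumes "u < 8" "v < 8" "u \<noteq> v"
  shows "card (cube_neighbours u \<inter> cube_neighbours v) \<le> 2"
proof -
  have "{..<3} = {0, 1, 2::nat}"
    by auto
  then have "\<forall>u<8. \<forall>v<8. u \<noteq> v \<longrightarrow> card (cube_neighbours u \<inter> cube_neighbours v) \<le> 2"
    unfolding all_less_8 by (simp add: cube_neighbours_def flip_bit_nat_def)
  then show ?thesis
    using assms by blast
qed

lemma Q3_distance_cases:
  assumes "u < (8::nat)" "v < 8" "u \<noteq> v"
  obtains (adjacent) k where "k < 3" "v = flip_bit k u"
    | (distance_two) a b where "a < 3" "b < 3" "a \<noteq> b" "v = flip_bit b (flip_bit a u)"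
    | (antipodal) "v = flip_bit 2 (flip_bit 1 (flip_bit 0 u))"
proof -
  have "\<forall>u<8. \<forall>v<(8::nat). u \<noteq> v \<longrightarrow> v = flip_bit 0 u \<or> v = flip_bit 1 u \<or> v = flip_bit 2 u \<or>
      v = flip_bit 1 (flip_bit 0 u) \<or> v = flip_bit 2 (flip_bit 0 u) \<or> v = flip_bit 2 (flip_bit 1 u) \<or>
      v = flip_bit 2 (flip_bit 1 (flip_bit 0 u))"
    unfolding all_less_8 by (simp add: flip_bit_nat_def)
  then have "v = flip_bit 0 u \<or> v = flip_bit 1 u \<or> v = flip_bit 2 u \<or>
      v = flip_bit 1 (flip_bit 0 u) \<or> v = flip_bit 2 (flip_bit 0 u) \<or> v = flip_bit 2 (flip_bit 1 u) \<or>
      v = flip_bit 2 (flip_bit 1 (flip_bit 0 u))"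
    using assms by blast
  then show ?thesis
    using adjacent[of 0] adjacent[of 1] adjacent[of 2] antipodal
      distance_two[of 0 1] distance_two[of 0 2] distance_two[of 1 2]
    by (elim disjE) simp_all
qed

lemma endpoints_swap_cube_edge:
  assumes "u < 8" "i < 3" "v < 8" "j < 3" "w < 8" "k < 3"
  shows "endpoints (swap_half_edges Q3 (cube_half_edge u i) (cube_half_edge v j)) (fst (cube_half_edge w k)) =
    {if (w, k) = (u, i) then v else if (w, k) = (v, j) then u else w,
     if (flip_bit k w, k) = (u, i) then v else if (flip_bit k w, k) = (v, j) then u else flip_bit k w}"
proof -
  have "hend Q3 (transpose (cube_half_edge u i) (cube_half_edge v j) (cube_half_edge x k)) =
      (if (x, k) = (u, i) then v else if (x, k) = (v, j) then u else x)" if "x < 8" for x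
    using assms that by (auto simp: transpose_def cube_half_edge_eq_iff)
  then show ?thesis
    using assms by (simp add: endpoints_cube_edge hend_swap_half_edges flip_bit_less_8)
qed

text \<open>The exchange joins \<open>v\<close> to \<open>flip_bit 0 u\<close>; as \<open>k \<noteq> j\<close>, the edges leaving \<open>v\<close> in
  direction \<open>k\<close> and \<open>flip_bit 0 u\<close> in direction \<open>m\<close> are untouched and close a triangle.\<close>
lemma swap_antipodal_triangle:
  fixes u j :: nat
  defines "v \<equiv> flip_bit 2 (flip_bit 1 (flip_bit 0 u))"
    and "k \<equiv> if j = 1 then 2 else 1" and "m \<equiv> if j = 1 then 1 else (2::nat)"
    and "H \<equiv> swap_half_edges Q3 (cube_half_edge u 0)
      (cube_half_edge (flip_bit 2 (flip_bit 1 (flip_bit 0 u))) j)"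
  assumes "u < 8" "j < 3"
  shows "adjacent H v (flip_bit 0 u) \<and> adjacent H (flip_bit 0 u) (flip_bit k v) \<and>
    adjacent H v (flip_bit k v) \<and> v \<noteq> flip_bit 0 u \<and> flip_bit 0 u \<noteq> flip_bit k v"
proof -
  have "\<forall>u<8. \<forall>j<3. let v = flip_bit 2 (flip_bit 1 (flip_bit 0 u)); k = if j = 1 then 2 else 1;
      m = if j = 1 then 1 else (2::nat);
      H = swap_half_edges Q3 (cube_half_edge u 0) (cube_half_edge v j) in
      endpoints H (fst (cube_half_edge u 0)) = {v, flip_bit 0 u} \<and>
      endpoints H (fst (cube_half_edge v k)) = {v, flip_bit k v} \<and>
      endpoints H (fst (cube_half_edge (flip_bit 0 u) m)) = {flip_bit 0 u, flip_bit k v} \<and>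
      v \<noteq> flip_bit 0 u \<and> flip_bit 0 u \<noteq> flip_bit k v"
    unfolding all_less_8 all_less_3 Let_def
    by (simp add: endpoints_swap_cube_edge flip_bit_nat_def numeral_3_eq_3[symmetric])
  then have "endpoints H (fst (cube_half_edge u 0)) = {v, flip_bit 0 u}"
    and "endpoints H (fst (cube_half_edge v k)) = {v, flip_bit k v}"
    and "endpoints H (fst (cube_half_edge (flip_bit 0 u) m)) = {flip_bit 0 u, flip_bit k v}"
    and "v \<noteq> flip_bit 0 u \<and> flip_bit 0 u \<noteq> flip_bit k v"
    using assms unfolding Let_def H_def v_def k_def m_def by blast+
  moreover have "v < 8" "k < 3" "m < 3" "flip_bit 0 u < 8"
    using assms flip_bit_less_8 by (simp_all add: v_def k_def m_def)
  then have "fst (cube_half_edge u 0) \<in> edges H" "fst (cube_half_edge v k) \<in> edges H"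
    "fst (cube_half_edge (flip_bit 0 u) m) \<in> edges H"
    using assms cube_half_edge_in_edges by (simp_all add: H_def)
  ultimately show ?thesis
    unfolding adjacent_def by blast
qed

section \<open>Vertices with equal tiles in a design of the cube\<close>

locale Q3_design =
  fixes P :: "'a tile set" and lam :: "nat \<times> bool \<Rightarrow> 'a cend"
  assumes scenario3: "scenario3 P Q3"
    and design: "assembly_design Q3 lam"
    and pot_of_subset: "pot_of Q3 lam \<subseteq> P"
begin

definition same_tile :: "nat \<Rightarrow> nat \<Rightarrow> bool" where
  "same_tile u v \<longleftrightarrow> u < 8 \<and> v < 8 \<and> u \<noteq> v \<and> tile_at Q3 lam u = tile_at Q3 lam v"

lemma same_tile_sym: "same_tile u v \<Longrightarrow> same_tile v u"
  by (auto simp: same_tile_def)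

lemma swap_equal_labels_simple_triangle_free:
  assumes "u < 8" "i < 3" "v < 8" "j < 3" "lam (cube_half_edge u i) = lam (cube_half_edge v j)"
  defines "H \<equiv> swap_half_edges Q3 (cube_half_edge u i) (cube_half_edge v j)"
  shows "loop_free H \<and> multi_edge_free H \<and> triangle_free H"
proof -
  have "wf_graph Q3"
    using scenario3 by (simp add: scenario3_def realizes_def)
  have edges: "fst (cube_half_edge u i) \<in> edges Q3" "fst (cube_half_edge v j) \<in> edges Q3"
    using assms cube_half_edge_in_edges by blast+
  show ?thesis
    unfolding H_def
    by (rule graph_iso_reflects_simple_triangle_free
        [OF graph_iso_swap_half_edges[OF scenario3 design pot_of_subset edges assms(5)]
          wf_graph_swap_half_edges[OF \<open>wf_graph Q3\<close> edges]
          loop_free_Q3 multi_edge_free_Q3 triangle_free_Q3])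
qed

lemma same_tile_label_reappears:
  assumes "same_tile u v" "i < 3"
  obtains j where "j < 3" "lam (cube_half_edge u i) = lam (cube_half_edge v j)"
proof -
  have "u < 8"
    using assms(1) by (simp add: same_tile_def)
  then have "\<forall>i<3. lam (cube_half_edge u i) \<in># tile_at Q3 lam u"
    by (simp add: tile_at_Q3 all_less_3)
  then have "lam (cube_half_edge u i) \<in># tile_at Q3 lam v"
    using assms by (simp add: same_tile_def)
  then show ?thesis
    using assms(1) that[of 0] that[of 1] that[of 2] by (auto simp: same_tile_def tile_at_Q3)
qed

lemma same_tile_not_adjacent:
  assumes "same_tile u v" "k < 3"
  shows "v \<noteq> flip_bit k u"
proof
  assume v: "v = flip_bit k u"
  have "u < 8" "v < 8"
    using assms(1) by (simp_all add: same_tile_def)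
  obtain j where j: "j < 3" "lam (cube_half_edge u k) = lam (cube_half_edge v j)"
    using same_tile_label_reappears[OF assms] .
  show False
  proof (cases "j = k")
    case True
    then have "lam (cube_half_edge u k) = compl (lam (cube_half_edge u k))"
      using j v label_cube_half_edge_opposite[OF design \<open>u < 8\<close> assms(2)] by simp
    then show False
      by (simp add: compl_def prod_eq_iff)
  next
    case False
    then have "endpoints (swap_half_edges Q3 (cube_half_edge u k) (cube_half_edge v j))
        (fst (cube_half_edge u k)) = {v}"
      using \<open>u < 8\<close> \<open>v < 8\<close> assms(2) j(1) v by (simp add: endpoints_swap_cube_edge)
    then show False
      using swap_equal_labels_simple_triangle_free[OF \<open>u < 8\<close> assms(2) \<open>v < 8\<close> j]
        loop_free_endpoints_not_singleton cube_half_edge_in_edges[OF \<open>u < 8\<close> assms(2)]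
      by simp
  qed
qed

lemma same_tile_not_antipodal:
  assumes "same_tile u v"
  shows "v \<noteq> flip_bit 2 (flip_bit 1 (flip_bit 0 u))"
proof
  assume v: "v = flip_bit 2 (flip_bit 1 (flip_bit 0 u))"
  have "u < 8" "v < 8"
    using assms by (simp_all add: same_tile_def)
  obtain j where j: "j < 3" "lam (cube_half_edge u 0) = lam (cube_half_edge v j)"
    using same_tile_label_reappears[OF assms, of 0] by auto
  have "triangle_free (swap_half_edges Q3 (cube_half_edge u 0) (cube_half_edge v j))"
    using swap_equal_labels_simple_triangle_free[OF \<open>u < 8\<close> _ \<open>v < 8\<close> j] by simp
  then show False
    using swap_antipodal_triangle[OF \<open>u < 8\<close> j(1)] v
    unfolding triangle_free_def by (metis flip_bit_neq(1))
qed

lemma same_tile_distance_two: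
  assumes "same_tile u v"
  obtains a b where "a < 3" "b < 3" "a \<noteq> b" "v = flip_bit b (flip_bit a u)"
proof -
  have "u < 8" "v < 8" "u \<noteq> v"
    using assms by (simp_all add: same_tile_def)
  then show ?thesis
  proof (cases rule: Q3_distance_cases)
    case (adjacent k)
    then show ?thesis
      using same_tile_not_adjacent[OF assms] by blast
  next
    case (distance_two a b)
    then show ?thesis
      using that by blast
  next
    case antipodal
    then show ?thesis
      using same_tile_not_antipodal[OF assms] by blast
  qed
qed

text \<open>Otherwise the exchange would add a second edge between \<open>v\<close> and the common
  neighbour \<open>flip_bit i u\<close>.\<close>
lemma same_tile_common_neighbour_direction:
  assumes "same_tile u v" "i < 3" "j < 3" "k < 3"
    and "lam (cube_half_edge u i) = lam (cube_half_edge v j)" "flip_bit k v = flip_bit i u"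
  shows "k = j"
proof (rule ccontr)
  assume "k \<noteq> j"
  have "u < 8" "v < 8" "u \<noteq> v"
    using assms(1) by (simp_all add: same_tile_def)
  have "v \<noteq> flip_bit i u"
    using same_tile_not_adjacent[OF assms(1,2)] .
  let ?H = "swap_half_edges Q3 (cube_half_edge u i) (cube_half_edge v j)"
  have "endpoints ?H (fst (cube_half_edge u i)) = {v, flip_bit i u}"
    using \<open>u < 8\<close> \<open>v < 8\<close> assms(2,3) \<open>v \<noteq> flip_bit i u\<close>
    by (auto simp: endpoints_swap_cube_edge)
  moreover have "endpoints ?H (fst (cube_half_edge v k)) = {v, flip_bit i u}"
    using \<open>u < 8\<close> \<open>v < 8\<close> assms(2-4,6) \<open>u \<noteq> v\<close> \<open>k \<noteq> j\<close>
    by (auto simp: endpoints_swap_cube_edge)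
  moreover have "fst (cube_half_edge u i) \<noteq> fst (cube_half_edge v k)"
    using cube_half_edge_same_edge[OF \<open>u < 8\<close> assms(2) \<open>v < 8\<close> assms(4)]
      \<open>u \<noteq> v\<close> \<open>v \<noteq> flip_bit i u\<close> by auto
  moreover have "multi_edge_free ?H"
    using swap_equal_labels_simple_triangle_free[OF \<open>u < 8\<close> assms(2) \<open>v < 8\<close> assms(3,5)] by simp
  ultimately show False
    using cube_half_edge_in_edges[OF \<open>u < 8\<close> assms(2)] cube_half_edge_in_edges[OF \<open>v < 8\<close> assms(4)]
    unfolding multi_edge_free_def inj_on_def by (metis edges_swap_half_edges)
qed

lemma same_tile_labels_match:
  assumes "same_tile u v" "a < 3" "b < 3" "a \<noteq> b" "v = flip_bit b (flip_bit a u)"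
    and "i < 3" "j < 3" "lam (cube_half_edge u i) = lam (cube_half_edge v j)"
  shows "j = transpose a b i"
proof -
  have flip_b: "flip_bit b v = flip_bit a u"
    using assms(5) by simp
  have flip_a: "flip_bit a v = flip_bit b u"
    using assms(5) by (metis flip_bit_commute flip_bit_flip_bit_same)
  consider "i = a" | "i = b" | "i \<noteq> a" "i \<noteq> b"
    by blast
  then show ?thesis
  proof cases
    case 1
    then show ?thesis
      using same_tile_common_neighbour_direction[OF assms(1,6,7,3,8)] flip_b by simp
  next
    case 2
    then show ?thesis
      using same_tile_common_neighbour_direction[OF assms(1,6,7,2,8)] flip_a by simp
  next
    case 3
    have "same_tile v u"
      using assms(1) by (rule same_tile_sym)
    have "j \<noteq> a"
    proof
      assume "j = a"
      then have "b = i"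
        using same_tile_common_neighbour_direction[OF \<open>same_tile v u\<close> assms(7,6,3) assms(8)[symmetric]]
          flip_a by simp
      then show False
        using 3 by simp
    qed
    moreover have "j \<noteq> b"
    proof
      assume "j = b"
      then have "a = i"
        using same_tile_common_neighbour_direction[OF \<open>same_tile v u\<close> assms(7,6,2) assms(8)[symmetric]]
          flip_b by simp
      then show False
        using 3 by simp
    qed
    ultimately have "j = i"
      using assms(2-4,6,7) 3 by arith
    then show ?thesis
      using 3 by simp
  qed
qed

lemma same_tile_labels_distinct:
  assumes "same_tile u v" "i < 3" "i' < 3" "i \<noteq> i'"
  shows "lam (cube_half_edge u i) \<noteq> lam (cube_half_edge u i')"
proof
  assume eq: "lam (cube_half_edge u i) = lam (cube_half_edge u i')"
  obtain a b where ab: "a < 3" "b < 3" "a \<noteq> b" "v = flip_bit b (flip_bit a u)"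
    using same_tile_distance_two[OF assms(1)] .
  obtain j where j: "j < 3" "lam (cube_half_edge u i) = lam (cube_half_edge v j)"
    using same_tile_label_reappears[OF assms(1,2)] .
  have "transpose a b i = transpose a b i'"
    using same_tile_labels_match[OF assms(1) ab assms(2) j] same_tile_labels_match[OF assms(1) ab assms(3) j(1)]
      eq j(2) by simp
  then show False
    using assms(4) by (blast dest: transpose_eq_imp_eq)
qed

lemma common_neighbour_not_same_tile:
  assumes "same_tile u v" "same_tile s t" "s \<in> cube_neighbours u" "s \<in> cube_neighbours v"
  shows False
proof -
  have "u < 8" "v < 8" "u \<noteq> v"
    using assms(1) by (simp_all add: same_tile_def)
  obtain k k' where k: "k < 3" "s = flip_bit k u" and k': "k' < 3" "s = flip_bit k' v"
    using assms(3,4) by (auto simp: cube_neighbours_def)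
  obtain j where j: "j < 3" "lam (cube_half_edge u k) = lam (cube_half_edge v j)"
    using same_tile_label_reappears[OF assms(1) k(1)] .
  have "k' = j"
    using same_tile_common_neighbour_direction[OF assms(1) k(1) j(1) k'(1) j(2)] k k' by simp
  then have "lam (cube_half_edge s k) = lam (cube_half_edge s k')"
    using label_cube_half_edge_opposite[OF design \<open>u < 8\<close> k(1)]
      label_cube_half_edge_opposite[OF design \<open>v < 8\<close> k'(1)] k k' j by simp
  moreover have "k \<noteq> k'"
    using k k' \<open>u \<noteq> v\<close> by (metis flip_bit_flip_bit_same)
  ultimately show False
    using same_tile_labels_distinct[OF assms(2) k(1) k'(1)] by blast
qed

lemma same_tile_common_neighbours:
  assumes "same_tile u v"
  obtains x y where "x \<noteq> y" "{x, y} \<subseteq> cube_neighbours u \<inter> cube_neighbours v"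
proof -
  obtain a b where ab: "a < 3" "b < 3" "a \<noteq> b" "v = flip_bit b (flip_bit a u)"
    using same_tile_distance_two[OF assms] .
  have "flip_bit b v = flip_bit a u" "flip_bit a v = flip_bit b u"
    using ab(4) by (simp, metis flip_bit_commute flip_bit_flip_bit_same)
  then have "{flip_bit a u, flip_bit b u} \<subseteq> cube_neighbours u \<inter> cube_neighbours v"
    using ab(1,2) flip_bit_in_cube_neighbours[of a u] flip_bit_in_cube_neighbours[of b u]
      flip_bit_in_cube_neighbours[of b v] flip_bit_in_cube_neighbours[of a v] by simp
  moreover have "flip_bit a u \<noteq> flip_bit b u"
    using ab(3) by simp
  ultimately show ?thesis
    using that by blast
qed

lemma no_three_disjoint_same_tile_pairs:
  assumes "same_tile a1 b1" "same_tile a2 b2" "same_tile a3 b3"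
    and "distinct [a1, b1, a2, b2, a3, b3]"
  shows False
proof -
  define S where "S = {a1, b1, a2, b2, a3, b3}"
  define R where "R = {0..<8} - S"
  have "S \<subseteq> {0..<8}"
    using assms(1-3) by (auto simp: S_def same_tile_def)
  moreover have "card S = 6" "finite S"
    using assms(4) by (simp_all add: S_def)
  ultimately have "card R = 2"
    by (simp add: R_def card_Diff_subset)
  have "finite R" "R \<subseteq> {0..<8}"
    by (auto simp: R_def)
  have common_in_R: "x \<in> R"
    if "same_tile u v" "x \<in> cube_neighbours u" "x \<in> cube_neighbours v" for u v x
  proof -
    have "x < 8"
      using that by (auto simp: same_tile_def cube_neighbours_def flip_bit_less_8)
    moreover have "\<not> same_tile x y" for y
      using common_neighbour_not_same_tile[OF that(1) _ that(2,3)] by blast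
    then have "x \<notin> S"
      using assms(1-3) same_tile_sym unfolding S_def by blast
    ultimately show ?thesis
      by (simp add: R_def)
  qed
  have R_common: "R \<subseteq> cube_neighbours u \<inter> cube_neighbours v" if uv: "same_tile u v" for u v
  proof -
    obtain x y where xy: "x \<noteq> y" "{x, y} \<subseteq> cube_neighbours u \<inter> cube_neighbours v"
      using same_tile_common_neighbours[OF uv] .
    then have "{x, y} \<subseteq> R"
      using common_in_R uv by blast
    then have "{x, y} = R"
      using xy(1) \<open>card R = 2\<close> \<open>finite R\<close> by (simp add: card_subset_eq)
    then show ?thesis
      using xy(2) by simp
  qed
  obtain x y where R: "R = {x, y}" "x \<noteq> y"
    using \<open>card R = 2\<close> by (meson card_2_iff)
  have "w \<in> cube_neighbours x \<inter> cube_neighbours y" if "w \<in> {a1, b1, a2, b2}" for w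
  proof -
    have "{x, y} \<subseteq> cube_neighbours w"
      using that R(1) R_common[OF assms(1)] R_common[OF assms(2)] by blast
    then show ?thesis
      using cube_neighbours_sym by blast
  qed
  then have "{a1, b1, a2, b2} \<subseteq> cube_neighbours x \<inter> cube_neighbours y"
    by blast
  moreover have "finite (cube_neighbours x \<inter> cube_neighbours y)"
    by (simp add: cube_neighbours_def)
  ultimately have "card {a1, b1, a2, b2} \<le> card (cube_neighbours x \<inter> cube_neighbours y)"
    by (simp add: card_mono)
  moreover have "card {a1, b1, a2, b2} = 4"
    using assms(4) by simp
  moreover have "card (cube_neighbours x \<inter> cube_neighbours y) \<le> 2"
    using R \<open>R \<subseteq> {0..<8}\<close> by (intro card_common_cube_neighbours) auto
  ultimately show False
    by linarith
qed

end

theorem lemma6: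
  fixes P :: "'a tile set" and lam :: "nat \<times> bool \<Rightarrow> 'a cend"
  assumes "pot P"
    and "scenario3 P Q3"
    and "assembly_design Q3 lam"
    and "pot_of Q3 lam \<subseteq> P"
  shows "\<not> (\<exists>a1 b1 a2 b2 a3 b3.
            {a1, b1, a2, b2, a3, b3} \<subseteq> verts Q3 \<and>
            a1 \<noteq> b1 \<and> a2 \<noteq> b2 \<and> a3 \<noteq> b3 \<and>
            tile_at Q3 lam a1 = tile_at Q3 lam b1 \<and>
            tile_at Q3 lam a2 = tile_at Q3 lam b2 \<and>
            tile_at Q3 lam a3 = tile_at Q3 lam b3 \<and>
            {a1, b1} \<inter> {a2, b2} = {} \<and> {a1, b1} \<inter> {a3, b3} = {} \<and>
            {a2, b2} \<inter> {a3, b3} = {})"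
proof (rule notI, elim exE conjE)
  fix a1 b1 a2 b2 a3 b3
  assume sub: "{a1, b1, a2, b2, a3, b3} \<subseteq> verts Q3"
    and ne: "a1 \<noteq> b1" "a2 \<noteq> b2" "a3 \<noteq> b3"
    and tiles: "tile_at Q3 lam a1 = tile_at Q3 lam b1" "tile_at Q3 lam a2 = tile_at Q3 lam b2"
      "tile_at Q3 lam a3 = tile_at Q3 lam b3"
    and disjoint: "{a1, b1} \<inter> {a2, b2} = {}" "{a1, b1} \<inter> {a3, b3} = {}" "{a2, b2} \<inter> {a3, b3} = {}"
  interpret Q3_design P lam
    using assms(2-4) by unfold_locales
  have "same_tile a1 b1" "same_tile a2 b2" "same_tile a3 b3"
    using sub ne tiles by (simp_all add: same_tile_def verts_Q3)
  moreover have "distinct [a1, b1, a2, b2, a3, b3]"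
    using ne disjoint by auto
  ultimately show False
    by (rule no_three_disjoint_same_tile_pairs)
qed

end
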